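(* Let $n\ge 3$. For an SSM-recurrent configuration $c$ on $W_n$, let $\Phi_W(c)=(\mathcal O,M)$ where $\mathcal O=\mathcal O(m(c))$ and $M$ is the set of vertices $i\in[n]$ with $c_i=2$ that are not cyclically first maximal vertices of $c$. Then $\Phi_W$ is a bijection from the set of SSM-recurrent configurations on $W_n$ to the set $\mathrm{PMO}(C_n)$ of properly-marked orientations of $C_n$. Moreover $\mathrm{level}(c)=|M|$ and $\mathrm{weight}^{01^*}(c)$ equals the number of clockwise-directed edges of $\mathcal O$.
   Context: $C_n$: cycle on $[n]$ with edges $\{i,i+1\}$ (indices mod $n$, vertices arranged clockwise); $W_n$: $C_n$ plus sink $0$ adjacent to all of $[n]$. Stable configurations on $W_n$ are $c\in\{0,1,2\}^n$. SSM (parameter $p\in(0,1)$: a toppling vertex sends a grain to each neighbour independently with probability $p$, grains to the sink vanish); its Markov chain adds a grain at a random vertex and stabilises; SSM-recurrent = recurrent state; known: stable $c$ is SSM-recurrent iff for all $i,j$ with $c_i=c_j=0$ some $k\in(i,j)$ has $c_k=2$, where $(i,j)$ is the set of vertices strictly between $i$ and $j$ clockwise from $i$ to $j$ and $(i,i)=[n]\setminus\{i\}$. Minimal SSM-recurrent: no other SSM-recurrent configuration is componentwise $\le c$. Level: $\mathrm{level}(c)=\sum_i c_i-n$. A vertex $i$ is cyclically first maximal in $c$ if $c_i=2$ and there is $j$ with $c_j=0$ and $c_k=1$ for all $k\in(j,i)$. Canonical minimal configuration $m(c)$: $m(c)_i=0$ if $c_i=0$, $2$ if $i$ is cyclically first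 maximal, $1$ otherwise. For a minimal SSM-recurrent $c'$, $\mathcal O(c')$ is the unique orientation of $C_n$ with in-degree $c'_i$ at every vertex $i$ if $c'\ne(1,\ldots,1)$, and the counter-clockwise directed cycle ($i+1\to i$ for all $i$) if $c'=(1,\ldots,1)$. An edge $\{i,i+1\}$ is clockwise if directed $i\to i+1$, counter-clockwise if $i+1\to i$. A properly-marked orientation of $C_n$ is a pair $(\mathcal O,M)$, $\mathcal O$ an orientation of $C_n$ and $M\subseteq[n]$, such that every $i\in M$ satisfies $i+1\to i\to i-1$ in $\mathcal O$, and $\mathcal O$ has at least one counter-clockwise edge. A $01^*$-chain of $c$ is a set of consecutive vertices $j,j+1,\ldots,j+k$ with $c_j=0$ and $c_{j'}=1$ for $j<j'\le j+k$; $\mathrm{weight}^{01^*}(c)$ is the number of vertices $i$ belonging to some $01^*$-chain (i.e. $c_i=0$, or $c_i=1$ and there is $j$ with $c_j=0$ and $c_k=1$ for all $k$ in the clockwise half-open interval $(j,i]$). *)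

theory Defs
  imports Main
begin

text \<open>The sink 0 of the wheel W_n plays no
role in the combinatorial definitions below. A configuration is a function
c :: nat => nat, only its values on {1..n} matter (we require 0 outside).\<close>

definition vert :: "nat \<Rightarrow> nat set" where
  "vert n = {1..n}"

definition succ :: "nat \<Rightarrow> nat \<Rightarrow> nat" where
  "succ n i = (i mod n) + 1"

definition pred :: "nat \<Rightarrow> nat \<Rightarrow> nat" where
  "pred n i = ((i + n - 2) mod n) + 1"

text \<open>clockwise distance from i to j, with the distance from i to itself taken as n
(so that the open interval (i,i) is [n] minus i)\<close>
definition cwd :: "nat \<Rightarrow> nat \<Rightarrow> nat \<Rightarrow> nat" where
  "cwd n i j = (let d = nat ((int j - int i) mod int n) in if d = 0 then n else d)"

definition cyc_open :: "nat \<Rightarrow> nat \<Rightarrow> nat \<Rightarrow> nat set" where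
  "cyc_open n i j = {k \<in> vert n. k \<noteq> i \<and> cwd n i k < cwd n i j}"

definition stable :: "nat \<Rightarrow> (nat \<Rightarrow> nat) set" where
  "stable n = {c. (\<forall>i\<in>vert n. c i \<le> 2) \<and> (\<forall>i. i \<notin> vert n \<longrightarrow> c i = 0)}"

text \<open>SSM-recurrent configurations, via the known characterisation\<close>
definition ssm_recurrent :: "nat \<Rightarrow> (nat \<Rightarrow> nat) set" where
  "ssm_recurrent n = {c \<in> stable n. \<forall>i\<in>vert n. \<forall>j\<in>vert n.
      c i = 0 \<and> c j = 0 \<longrightarrow> (\<exists>k\<in>cyc_open n i j. c k = 2)}"

definition level :: "nat \<Rightarrow> (nat \<Rightarrow> nat) \<Rightarrow> int" where
  "level n c = (\<Sum>i\<in>vert n. int (c i)) - int n"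

definition cyc_first_max :: "nat \<Rightarrow> (nat \<Rightarrow> nat) \<Rightarrow> nat \<Rightarrow> bool" where
  "cyc_first_max n c i \<longleftrightarrow> c i = 2 \<and>
     (\<exists>j\<in>vert n. c j = 0 \<and> (\<forall>k\<in>cyc_open n j i. c k = 1))"

definition mcan :: "nat \<Rightarrow> (nat \<Rightarrow> nat) \<Rightarrow> (nat \<Rightarrow> nat)" where
  "mcan n c = (\<lambda>i. if i \<notin> vert n then 0 else if c i = 0 then 0
                  else if cyc_first_max n c i then 2 else 1)"

text \<open>Orientations of C_n: ori i for i in [n] describes the edge {i, i+1};
ori i = True means clockwise (i \<rightarrow> i+1), False means counter-clockwise (i+1 \<rightarrow> i).\<close>
definition orientations :: "nat \<Rightarrow> (nat \<Rightarrow> bool) set" where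
  "orientations n = {ori. \<forall>i. i \<notin> vert n \<longrightarrow> \<not> ori i}"

definition indeg :: "nat \<Rightarrow> (nat \<Rightarrow> bool) \<Rightarrow> nat \<Rightarrow> nat" where
  "indeg n ori i = (if ori (pred n i) then 1 else 0) + (if \<not> ori i then 1 else 0)"

definition orient_of :: "nat \<Rightarrow> (nat \<Rightarrow> nat) \<Rightarrow> (nat \<Rightarrow> bool)" where
  "orient_of n c' = (if \<forall>i\<in>vert n. c' i = 1 then (\<lambda>i. False)
     else (THE ori. ori \<in> orientations n \<and> (\<forall>i\<in>vert n. indeg n ori i = c' i)))"

definition PMO :: "nat \<Rightarrow> ((nat \<Rightarrow> bool) \<times> nat set) set" where
  "PMO n = {(ori, M). ori \<in> orientations n \<and> M \<subseteq> vert n \<and>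
      (\<forall>i\<in>M. \<not> ori i \<and> \<not> ori (pred n i)) \<and> (\<exists>i\<in>vert n. \<not> ori i)}"

definition Phi_W :: "nat \<Rightarrow> (nat \<Rightarrow> nat) \<Rightarrow> (nat \<Rightarrow> bool) \<times> nat set" where
  "Phi_W n c = (orient_of n (mcan n c), {i \<in> vert n. c i = 2 \<and> \<not> cyc_first_max n c i})"

definition weight01 :: "nat \<Rightarrow> (nat \<Rightarrow> nat) \<Rightarrow> nat" where
  "weight01 n c = card {i \<in> vert n. c i = 0 \<or> (c i = 1 \<and>
      (\<exists>j\<in>vert n. c j = 0 \<and> (\<forall>k\<in>cyc_open n j i \<union> {i}. c k = 1)))}"

definition num_cw :: "nat \<Rightarrow> (nat \<Rightarrow> bool) \<Rightarrow> nat" where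
  "num_cw n ori = card {i \<in> vert n. ori i}"

end

theory Submission
  imports Defs
begin

text \<open>Direct the edge \<open>{i, i+1}\<close> clockwise exactly when \<open>i\<close> lies in a \<open>01\<^sup>*\<close>-chain.
Chain membership propagates clockwise (\<open>i\<close> is in a chain iff \<open>c i = 0\<close>, or \<open>c i = 1\<close> and
\<open>i - 1\<close> is), and in a recurrent configuration the vertex before a \<open>0\<close> is never in a chain;
hence the in-degree of \<open>i\<close> is \<open>m(c) i\<close>, and the remaining \<open>2\<close>s, the marks, sit at
vertices whose two edges both point counter-clockwise. Conversely \<open>c\<close> is recovered as
in-degree plus mark indicator, and recurrence of this configuration holds because between
two sources the orientation must turn from clockwise to counter-clockwise, creating an
unmarked sink of value \<open>2\<close>. The in-degrees sum to \<open>n\<close>, which gives the level, and the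
clockwise edges are by construction the vertices of \<open>01\<^sup>*\<close>-chains.\<close>

lemma pred_eq_if: "i \<in> vert n \<Longrightarrow> pred n i = (if i = 1 then n else i - 1)"
proof -
  assume "i \<in> vert n"
  hence i: "1 \<le> i" "i \<le> n" by (auto simp: vert_def)
  show ?thesis
  proof (cases "i = 1")
    case True
    thus ?thesis using i by (simp add: pred_def)
  next
    case False
    have "(i + n - 2) mod n = i - 2"
      using i False by (simp add: le_add_diff mod_if)
    thus ?thesis using False i by (simp add: pred_def)
  qed
qed

lemma pred_in_vert: "i \<in> vert n \<Longrightarrow> pred n i \<in> vert n"
  by (auto simp: pred_eq_if vert_def)

lemma inj_on_pred: "inj_on (pred n) (vert n)"
  by (auto simp: inj_on_def pred_eq_if vert_def split: if_splits)

lemma pred_image_vert: "pred n ` vert n = vert n"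
  using pred_in_vert inj_on_pred by (intro endo_inj_surj) (auto simp: vert_def)

lemma cwd_eq_if:
  assumes "j \<in> vert n" "k \<in> vert n"
  shows "cwd n j k = (if j < k then k - j else k + n - j)"
proof -
  have b: "1 \<le> j" "j \<le> n" "1 \<le> k" "k \<le> n" using assms by (auto simp: vert_def)
  consider "j < k" | "j = k" | "k < j" by linarith
  thus ?thesis
  proof cases
    case 1
    hence "(int k - int j) mod int n = int k - int j" using b by simp
    thus ?thesis using 1 by (simp add: cwd_def Let_def)
  next
    case 3
    hence "(int k - int j + int n) mod int n = int k - int j + int n"
      using b by (intro mod_pos_pos_trivial) auto
    thus ?thesis using 3 b by (simp add: cwd_def Let_def nat_diff_distrib)
  qed (simp add: cwd_def)
qed

lemma cwd_self: "cwd n j j = n"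
  by (simp add: cwd_def)

lemma cwd_le: "j \<in> vert n \<Longrightarrow> k \<in> vert n \<Longrightarrow> cwd n j k \<le> n"
  and cwd_pos: "j \<in> vert n \<Longrightarrow> k \<in> vert n \<Longrightarrow> 0 < cwd n j k"
  by (auto simp: cwd_eq_if vert_def)

lemma cwd_inj:
  "\<lbrakk>j \<in> vert n; k \<in> vert n; k' \<in> vert n; cwd n j k = cwd n j k'\<rbrakk> \<Longrightarrow> k = k'"
  by (auto simp: cwd_eq_if vert_def split: if_splits)

lemma cwd_pred:
  "\<lbrakk>i \<in> vert n; j \<in> vert n; pred n i \<noteq> j\<rbrakk> \<Longrightarrow> cwd n j i = Suc (cwd n j (pred n i))"
  using pred_in_vert[of i n] by (auto simp: cwd_eq_if pred_eq_if vert_def)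

lemma cyc_open_pred:
  assumes "i \<in> vert n" "j \<in> vert n" "pred n i \<noteq> j"
  shows "cyc_open n j i = insert (pred n i) (cyc_open n j (pred n i))"
  using pred_in_vert[OF assms(1)] assms cwd_inj[OF assms(2) _ pred_in_vert[OF assms(1)]]
  by (auto simp: cyc_open_def cwd_pred less_Suc_eq)

lemma cyc_open_pred_self:
  assumes "i \<in> vert n"
  shows "cyc_open n (pred n i) i = {}"
proof -
  have "cwd n (pred n i) i = 1"
    using assms pred_in_vert[OF assms] by (auto simp: cwd_eq_if pred_eq_if vert_def)
  thus ?thesis using cwd_pos[OF pred_in_vert[OF assms]] by (fastforce simp: cyc_open_def)
qed

definition cw_shift :: "nat \<Rightarrow> nat \<Rightarrow> nat \<Rightarrow> nat" where
  "cw_shift n i t = (if i + t \<le> n then i + t else i + t - n)"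

lemma cw_shift_in_vert: "i \<in> vert n \<Longrightarrow> t < n \<Longrightarrow> cw_shift n i t \<in> vert n"
  by (auto simp: cw_shift_def vert_def)

lemma cw_shift_0: "i \<in> vert n \<Longrightarrow> cw_shift n i 0 = i"
  by (simp add: cw_shift_def vert_def)

lemma pred_cw_shift_Suc: "i \<in> vert n \<Longrightarrow> Suc t < n \<Longrightarrow> pred n (cw_shift n i (Suc t)) = cw_shift n i t"
  using cw_shift_in_vert[of i n "Suc t"] by (auto simp: pred_eq_if cw_shift_def vert_def)

lemma cwd_cw_shift: "i \<in> vert n \<Longrightarrow> 0 < t \<Longrightarrow> t < n \<Longrightarrow> cwd n i (cw_shift n i t) = t"
  using cw_shift_in_vert[of i n t] by (auto simp: cwd_eq_if cw_shift_def vert_def)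

lemma cw_shift_cwd_pred:
  "i \<in> vert n \<Longrightarrow> j \<in> vert n \<Longrightarrow> cw_shift n i (cwd n i j - 1) = pred n j"
  by (cases "i = j") (auto simp: cwd_self cwd_eq_if pred_eq_if cw_shift_def vert_def)

lemma cw_shift_surj: "i \<in> vert n \<Longrightarrow> k \<in> vert n \<Longrightarrow> \<exists>t<n. cw_shift n i t = k"
  by (rule exI[of _ "if i \<le> k then k - i else k + n - i"]) (auto simp: cw_shift_def vert_def)

lemma cycle_induct:
  assumes "k0 \<in> vert n" "P k0" "\<And>k. k \<in> vert n \<Longrightarrow> P (pred n k) \<Longrightarrow> P k"
  shows "\<forall>k\<in>vert n. P k"
proof -
  have "P (cw_shift n k0 t)" if "t < n" for t
    using that
  proof (induction t)
    case 0
    thus ?case using assms(1,2) by (simp add: cw_shift_0)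
  next
    case (Suc t)
    thus ?case
      using assms(3)[OF cw_shift_in_vert[OF assms(1) Suc.prems]] pred_cw_shift_Suc[OF assms(1)]
      by simp
  qed
  thus ?thesis using cw_shift_surj[OF assms(1)] by blast
qed

lemma exists_falling_step: "P 0 \<Longrightarrow> \<not> P m \<Longrightarrow> \<exists>t<m. P t \<and> \<not> P (Suc t)"
  by (induction m) (auto intro: less_SucI)

lemma orientation_switch_between:
  assumes i: "i \<in> vert n" and j: "j \<in> vert n" and "Or i" "\<not> Or (pred n j)"
  shows "\<exists>k\<in>cyc_open n i j. Or (pred n k) \<and> \<not> Or k"
proof -
  define m where "m = cwd n i j - 1"
  have m: "m < n" using cwd_le[OF i j] cwd_pos[OF i j] by (simp add: m_def)
  have "Or (cw_shift n i 0)" "\<not> Or (cw_shift n i m)"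
    using assms by (simp_all add: m_def cw_shift_0 cw_shift_cwd_pred del: One_nat_def)
  then obtain t where t: "t < m" "Or (cw_shift n i t)" "\<not> Or (cw_shift n i (Suc t))"
    using exists_falling_step[where P="\<lambda>t. Or (cw_shift n i t)"] by blast
  define k where "k = cw_shift n i (Suc t)"
  have tn: "Suc t < n" using t(1) m by linarith
  have k: "k \<in> vert n" "cwd n i k = Suc t"
    using cw_shift_in_vert[OF i tn] cwd_cw_shift[OF i _ tn] by (simp_all add: k_def)
  have "k \<noteq> i" using k(2) tn cwd_self[of n i] by auto
  hence "k \<in> cyc_open n i j" using k t(1) by (simp add: cyc_open_def m_def)
  moreover have "Or (pred n k) \<and> \<not> Or k"
    using t pred_cw_shift_Suc[OF i tn] by (simp add: k_def)
  ultimately show ?thesis by blast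
qed

definition follows_chain01 :: "nat \<Rightarrow> (nat \<Rightarrow> nat) \<Rightarrow> nat \<Rightarrow> bool" where
  "follows_chain01 n c i \<longleftrightarrow> (\<exists>j\<in>vert n. c j = 0 \<and> (\<forall>k\<in>cyc_open n j i. c k = 1))"

definition in_chain01 :: "nat \<Rightarrow> (nat \<Rightarrow> nat) \<Rightarrow> nat \<Rightarrow> bool" where
  "in_chain01 n c i \<longleftrightarrow> c i = 0 \<or> (c i = 1 \<and> follows_chain01 n c i)"

lemma cyc_first_max_iff: "cyc_first_max n c i \<longleftrightarrow> c i = 2 \<and> follows_chain01 n c i"
  by (simp add: cyc_first_max_def follows_chain01_def)

lemma follows_chain01_iff_pred:
  assumes i: "i \<in> vert n"
  shows "follows_chain01 n c i \<longleftrightarrow> in_chain01 n c (pred n i)"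
proof
  assume "follows_chain01 n c i"
  then obtain j where j: "j \<in> vert n" "c j = 0" "\<forall>k\<in>cyc_open n j i. c k = 1"
    by (auto simp: follows_chain01_def)
  show "in_chain01 n c (pred n i)"
  proof (cases "pred n i = j")
    case False
    thus ?thesis using j cyc_open_pred[OF i j(1)] by (auto simp: in_chain01_def follows_chain01_def)
  qed (use j in \<open>simp add: in_chain01_def\<close>)
next
  assume chain: "in_chain01 n c (pred n i)"
  show "follows_chain01 n c i"
  proof (cases "c (pred n i) = 0")
    case True
    thus ?thesis
      using cyc_open_pred_self[OF i] pred_in_vert[OF i] by (auto simp: follows_chain01_def)
  next
    case False
    with chain obtain j where j: "j \<in> vert n" "c j = 0" "\<forall>k\<in>cyc_open n j (pred n i). c k = 1"
      and one: "c (pred n i) = 1"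
      by (auto simp: in_chain01_def follows_chain01_def)
    hence "pred n i \<noteq> j" by auto
    thus ?thesis
      using j one cyc_open_pred[OF i j(1)] unfolding follows_chain01_def by (intro bexI[of _ j]) auto
  qed
qed

lemma in_chain01_iff_pred:
  "i \<in> vert n \<Longrightarrow> in_chain01 n c i \<longleftrightarrow> c i = 0 \<or> (c i = 1 \<and> in_chain01 n c (pred n i))"
  using follows_chain01_iff_pred[of i n c] by (auto simp: in_chain01_def)

lemma not_in_chain01_if_no_zero: "\<forall>j\<in>vert n. c j \<noteq> 0 \<Longrightarrow> k \<in> vert n \<Longrightarrow> \<not> in_chain01 n c k"
  by (auto simp: in_chain01_def follows_chain01_def)

lemma ssm_recurrent_le_2: "c \<in> ssm_recurrent n \<Longrightarrow> i \<in> vert n \<Longrightarrow> c i \<le> 2"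
  and ssm_recurrent_outside: "c \<in> ssm_recurrent n \<Longrightarrow> i \<notin> vert n \<Longrightarrow> c i = 0"
  by (auto simp: ssm_recurrent_def stable_def)

lemma ssm_recurrent_zero_pred_not_in_chain01:
  assumes "c \<in> ssm_recurrent n" "i \<in> vert n" "c i = 0"
  shows "\<not> in_chain01 n c (pred n i)"
proof
  assume "in_chain01 n c (pred n i)"
  then obtain j where "j \<in> vert n" "c j = 0" "\<forall>k\<in>cyc_open n j i. c k = 1"
    using follows_chain01_iff_pred[OF assms(2)] by (auto simp: follows_chain01_def)
  thus False using assms by (fastforce simp: ssm_recurrent_def)
qed

lemma orientations_eqI:
  assumes "o1 \<in> orientations n" "o2 \<in> orientations n"
    and indeg: "\<forall>i\<in>vert n. indeg n o1 i = indeg n o2 i"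
    and i0: "i0 \<in> vert n" "indeg n o1 i0 \<noteq> 1"
  shows "o1 = o2"
proof -
  have step: "o1 k = o2 k \<longleftrightarrow> o1 (pred n k) = o2 (pred n k)" if "k \<in> vert n" for k
    using indeg that by (auto simp: indeg_def split: if_splits)
  have "o1 (pred n i0) = o2 (pred n i0) \<and> o1 i0 = o2 i0"
    using indeg i0 by (auto simp: indeg_def split: if_splits)
  hence "\<forall>k\<in>vert n. o1 k = o2 k"
    using cycle_induct[OF i0(1), where P="\<lambda>k. o1 k = o2 k"] step by blast
  thus ?thesis using assms(1,2) by (auto simp: orientations_def)
qed

lemma sum_indeg: "(\<Sum>i\<in>vert n. indeg n Or i) = n"
proof -
  have "(\<Sum>i\<in>vert n. of_bool (Or (pred n i)) :: nat) = (\<Sum>i\<in>pred n ` vert n. of_bool (Or i))"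
    by (simp add: sum.reindex[OF inj_on_pred])
  hence "(\<Sum>i\<in>vert n. indeg n Or i) = (\<Sum>i\<in>vert n. of_bool (Or i) + of_bool (\<not> Or i))"
    by (simp add: indeg_def sum.distrib pred_image_vert of_bool_def)
  also have "\<dots> = (\<Sum>i\<in>vert n. 1)" by (intro sum.cong) auto
  finally show ?thesis by (simp add: vert_def)
qed

lemma orient_of_eqI:
  assumes "Or \<in> orientations n" "i0 \<in> vert n" "\<not> Or i0" "\<forall>i\<in>vert n. c' i = indeg n Or i"
  shows "orient_of n c' = Or"
proof (cases "\<forall>i\<in>vert n. c' i = 1")
  case True
  hence "\<forall>k\<in>vert n. \<not> Or k"
    using assms(3,4) by (intro cycle_induct[OF assms(2)]) (auto simp: indeg_def)
  thus ?thesis using True assms(1) by (auto simp: orient_of_def orientations_def)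
next
  case False
  then obtain i where "i \<in> vert n" "indeg n Or i \<noteq> 1" using assms(4) by auto
  hence "(THE ori. ori \<in> orientations n \<and> (\<forall>i\<in>vert n. indeg n ori i = c' i)) = Or"
    using assms(1,4) orientations_eqI[of _ n Or] by (intro the_equality) auto
  thus ?thesis using False unfolding orient_of_def by (simp only: if_False)
qed

definition chain_orient :: "nat \<Rightarrow> (nat \<Rightarrow> nat) \<Rightarrow> nat \<Rightarrow> bool" where
  "chain_orient n c k \<longleftrightarrow> k \<in> vert n \<and> in_chain01 n c k"

definition marks :: "nat \<Rightarrow> (nat \<Rightarrow> nat) \<Rightarrow> nat set" where
  "marks n c = {i \<in> vert n. c i = 2 \<and> \<not> cyc_first_max n c i}"

lemma chain_orient_in_orientations: "chain_orient n c \<in> orientations n"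
  by (simp add: orientations_def chain_orient_def)

lemma indeg_chain_orient:
  assumes "c \<in> ssm_recurrent n" "i \<in> vert n"
  shows "indeg n (chain_orient n c) i = mcan n c i"
proof -
  have "c i = 0 \<or> c i = 1 \<or> c i = 2" using ssm_recurrent_le_2[OF assms] by linarith
  thus ?thesis
    using assms pred_in_vert[OF assms(2)] ssm_recurrent_zero_pred_not_in_chain01[OF assms]
      in_chain01_iff_pred[OF assms(2), of c] follows_chain01_iff_pred[OF assms(2), of c]
    by (auto simp: indeg_def mcan_def chain_orient_def cyc_first_max_iff)
qed

lemma chain_orient_has_ccw_edge:
  assumes "c \<in> ssm_recurrent n" "0 < n"
  shows "\<exists>i\<in>vert n. \<not> chain_orient n c i"
proof (cases "\<exists>i\<in>vert n. c i = 2")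
  case True
  thus ?thesis by (force simp: chain_orient_def in_chain01_def)
next
  case False
  have "c j \<noteq> 0" if "j \<in> vert n" for j
    using assms(1) False that by (force simp: ssm_recurrent_def cyc_open_def)
  moreover have "1 \<in> vert n" using assms(2) by (simp add: vert_def)
  ultimately show ?thesis using not_in_chain01_if_no_zero by (auto simp: chain_orient_def)
qed

lemma Phi_W_eq:
  assumes "c \<in> ssm_recurrent n" "0 < n"
  shows "Phi_W n c = (chain_orient n c, marks n c)"
proof -
  obtain i0 where "i0 \<in> vert n" "\<not> chain_orient n c i0"
    using chain_orient_has_ccw_edge[OF assms] by blast
  hence "orient_of n (mcan n c) = chain_orient n c"
    using chain_orient_in_orientations indeg_chain_orient[OF assms(1)] by (intro orient_of_eqI) auto
  thus ?thesis by (simp add: Phi_W_def marks_def)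
qed

lemma ssm_recurrent_eq_mcan_plus_marks:
  "c \<in> ssm_recurrent n \<Longrightarrow> i \<in> vert n \<Longrightarrow> c i = mcan n c i + of_bool (i \<in> marks n c)"
  using ssm_recurrent_le_2[of c n i] by (auto simp: mcan_def marks_def cyc_first_max_iff)

lemma chain_orient_marks_in_PMO:
  assumes "c \<in> ssm_recurrent n" "0 < n"
  shows "(chain_orient n c, marks n c) \<in> PMO n"
proof -
  have "\<not> chain_orient n c i \<and> \<not> chain_orient n c (pred n i)" if "i \<in> marks n c" for i
    using that follows_chain01_iff_pred[of i n c]
    by (auto simp: marks_def cyc_first_max_iff chain_orient_def in_chain01_def)
  thus ?thesis
    using chain_orient_in_orientations chain_orient_has_ccw_edge[OF assms]
    by (auto simp: PMO_def marks_def)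
qed

lemma level_eq_card_marks:
  assumes "c \<in> ssm_recurrent n"
  shows "level n c = int (card (marks n c))"
proof -
  have "(\<Sum>i\<in>vert n. c i) = (\<Sum>i\<in>vert n. indeg n (chain_orient n c) i + of_bool (i \<in> marks n c))"
    using ssm_recurrent_eq_mcan_plus_marks[OF assms] indeg_chain_orient[OF assms]
    by (intro sum.cong) auto
  also have "\<dots> = n + card (vert n \<inter> marks n c)"
    by (simp add: sum.distrib sum_indeg) (simp add: vert_def)
  also have "vert n \<inter> marks n c = marks n c" by (auto simp: marks_def)
  finally show ?thesis by (simp add: level_def flip: of_nat_sum)
qed

lemma weight01_eq_num_cw_chain_orient: "weight01 n c = num_cw n (chain_orient n c)"
proof -
  have "{i \<in> vert n. c i = 0 \<or> (c i = 1 \<and>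
      (\<exists>j\<in>vert n. c j = 0 \<and> (\<forall>k\<in>cyc_open n j i \<union> {i}. c k = 1)))} = {i \<in> vert n. chain_orient n c i}"
    by (auto simp: chain_orient_def in_chain01_def follows_chain01_def)
  thus ?thesis by (simp add: weight01_def num_cw_def)
qed

lemma inj_on_Phi_W: "0 < n \<Longrightarrow> inj_on (Phi_W n) (ssm_recurrent n)"
proof (rule inj_onI, rule ext)
  fix c1 c2 i
  assume n: "0 < n" and c: "c1 \<in> ssm_recurrent n" "c2 \<in> ssm_recurrent n"
    and "Phi_W n c1 = Phi_W n c2"
  hence "chain_orient n c1 = chain_orient n c2" "marks n c1 = marks n c2"
    using Phi_W_eq[OF _ n] by auto
  thus "c1 i = c2 i"
    using c ssm_recurrent_eq_mcan_plus_marks[of _ n i] indeg_chain_orient[of _ n i]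
      ssm_recurrent_outside[of _ n i]
    by (cases "i \<in> vert n") metis+
qed

definition config_of :: "nat \<Rightarrow> (nat \<Rightarrow> bool) \<Rightarrow> nat set \<Rightarrow> nat \<Rightarrow> nat" where
  "config_of n Or M i = (if i \<in> vert n then indeg n Or i + of_bool (i \<in> M) else 0)"

lemma config_of_orientation_iff_pred:
  assumes "(Or, M) \<in> PMO n" "k \<in> vert n"
  shows "Or k \<longleftrightarrow> config_of n Or M k = 0 \<or> (config_of n Or M k = 1 \<and> Or (pred n k))"
  using assms by (auto simp: PMO_def config_of_def indeg_def)

lemma config_of_stable: "(Or, M) \<in> PMO n \<Longrightarrow> config_of n Or M \<in> stable n"
  by (auto simp: PMO_def stable_def config_of_def indeg_def)

lemma chain_orient_config_of:
  assumes PMO: "(Or, M) \<in> PMO n"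
  shows "chain_orient n (config_of n Or M) = Or"
proof -
  define c where "c = config_of n Or M"
  have rec: "Or k \<longleftrightarrow> c k = 0 \<or> (c k = 1 \<and> Or (pred n k))" if "k \<in> vert n" for k
    using config_of_orientation_iff_pred[OF PMO that] by (simp add: c_def)
  have "\<forall>k\<in>vert n. in_chain01 n c k \<longleftrightarrow> Or k"
  proof (cases "\<exists>k0\<in>vert n. c k0 \<noteq> 1")
    case True
    then obtain k0 where "k0 \<in> vert n" "c k0 \<noteq> 1" by blast
    thus ?thesis
      using rec in_chain01_iff_pred[of _ n c] by (intro cycle_induct) auto
  next
    case False
    obtain i0 where "i0 \<in> vert n" "\<not> Or i0" using PMO by (auto simp: PMO_def)
    hence "\<forall>k\<in>vert n. \<not> Or k"
      using rec False by (intro cycle_induct[of i0 n "\<lambda>k. \<not> Or k"]) auto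
    thus ?thesis using False not_in_chain01_if_no_zero[of n c] by force
  qed
  thus ?thesis
    using PMO by (auto simp: c_def chain_orient_def PMO_def orientations_def fun_eq_iff)
qed

lemma config_of_ssm_recurrent:
  assumes PMO: "(Or, M) \<in> PMO n"
  shows "config_of n Or M \<in> ssm_recurrent n"
proof -
  have "\<exists>k\<in>cyc_open n i j. config_of n Or M k = 2"
    if i: "i \<in> vert n" and j: "j \<in> vert n"
      and zero: "config_of n Or M i = 0" "config_of n Or M j = 0" for i j
  proof -
    have "Or i" using config_of_orientation_iff_pred[OF PMO i] zero(1) by simp
    moreover have "\<not> Or (pred n j)" using zero(2) j by (simp add: config_of_def indeg_def split: if_splits)
    ultimately obtain k where k: "k \<in> cyc_open n i j" "Or (pred n k)" "\<not> Or k"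
      using orientation_switch_between[OF i j] by blast
    hence "k \<notin> M" using PMO by (auto simp: PMO_def)
    thus ?thesis using k by (auto simp: config_of_def indeg_def cyc_open_def)
  qed
  thus ?thesis using config_of_stable[OF PMO] by (auto simp: ssm_recurrent_def)
qed

lemma marks_config_of:
  assumes PMO: "(Or, M) \<in> PMO n"
  shows "marks n (config_of n Or M) = M"
proof -
  have "cyc_first_max n (config_of n Or M) i \<longleftrightarrow> config_of n Or M i = 2 \<and> Or (pred n i)"
    if "i \<in> vert n" for i
    using follows_chain01_iff_pred[OF that] fun_cong[OF chain_orient_config_of[OF PMO], of "pred n i"]
      pred_in_vert[OF that]
    by (auto simp: cyc_first_max_iff chain_orient_def)
  thus ?thesis
    using PMO by (auto simp: marks_def PMO_def config_of_def indeg_def)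
qed

lemma Phi_W_config_of: "(Or, M) \<in> PMO n \<Longrightarrow> 0 < n \<Longrightarrow> Phi_W n (config_of n Or M) = (Or, M)"
  by (simp add: Phi_W_eq config_of_ssm_recurrent chain_orient_config_of marks_config_of)

theorem mainTheorem6:
  fixes n :: nat
  assumes "n \<ge> 3"
  shows "bij_betw (Phi_W n) (ssm_recurrent n) (PMO n) \<and>
    (\<forall>c\<in>ssm_recurrent n.
       level n c = int (card (snd (Phi_W n c))) \<and>
       weight01 n c = num_cw n (fst (Phi_W n c)))"
proof -
  have n: "0 < n" using assms by simp
  have "Phi_W n ` ssm_recurrent n = PMO n"
  proof
    show "Phi_W n ` ssm_recurrent n \<subseteq> PMO n"
      using Phi_W_eq[OF _ n] chain_orient_marks_in_PMO[OF _ n] by auto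
    show "PMO n \<subseteq> Phi_W n ` ssm_recurrent n"
      using Phi_W_config_of[OF _ n] config_of_ssm_recurrent by force
  qed
  hence "bij_betw (Phi_W n) (ssm_recurrent n) (PMO n)"
    using inj_on_Phi_W[OF n] by (simp add: bij_betw_def)
  moreover have "level n c = int (card (snd (Phi_W n c)))"
    and "weight01 n c = num_cw n (fst (Phi_W n c))" if "c \<in> ssm_recurrent n" for c
    using Phi_W_eq[OF that n] level_eq_card_marks[OF that] weight01_eq_num_cw_chain_orient
    by simp_all
  ultimately show ?thesis by blast
qed

end
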